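(* The libraries $AbsQ$ and $AbsQ_0$ (defined in the context) have exactly the same set of histories: $AbsQ$ refines $AbsQ_0$ and $AbsQ_0$ refines $AbsQ$, i.e. $H(AbsQ)=H(AbsQ_0)$.
   Context: Fix a set $\mathit{Vals}$ of values containing a special value $\mathtt{EMPTY}$, take operation identifiers $\mathit{Ops}=\mathbb{N}$, and methods $\mathit{Methods}=\{enq,deq\}$. Call actions are $inv(m,d,k)$ and return actions $ret(m,d,k)$ ($m$ a method, $d$ a value, $k$ an operation identifier); $C$ and $R$ denote the sets of all call, resp. return, actions (the value field is omitted when irrelevant, e.g. $inv(deq,k)$, $ret(enq,k)$). A labeled transition system (LTS) $(Q,\Sigma,s_0,\delta)$ has states $Q$, alphabet $\Sigma$, initial state $s_0$ and transition relation $\delta\subseteq Q\times\Sigma\times Q$; a trace is the sequence of labels of a finite execution from $s_0$. The history set $H(L)$ of an LTS $L$ with $C\cup R\subseteq\Sigma$ is the set of projections of its traces onto $C\cup R$. $L_1$ refines $L_2$ iff $H(L_1)\subseteq H(L_2)$. For a partial function $f$, $f[x\mapsto y]$ is $f$ updated at $x$. $AbsQ_0$ (standard atomic queue): states are tuples $(\sigma,in,rv,cp)$ with $\sigma\in\mathit{Vals}^*$ and partial functions $in,rv:\mathit{Ops}\rightharpoonup\mathit{Vals}$, $cp:\mathit{Ops}\rightharpoonup\{A_1,A,A_2,R_1,R_2,R_3\}$; initially $\sigma=\epsilon$ and all functions empty. Transitions: $inv(enq,d,k)$ if $k\notin dom(cp)$, $d\ne\mathtt{EMPTY}$: set $in(k)=d$,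 $cp(k)=A_1$. $lin(enq,d,k)$ if $cp(k)=A_1$, $in(k)=d$: $\sigma:=d\cdot\sigma$, $cp(k)=A$. $ret(enq,k)$ if $cp(k)=A$: $cp(k)=A_2$. $inv(deq,k)$ if $k\notin dom(cp)$: $cp(k)=R_1$. $lin(deq,d,k)$ if $cp(k)=R_1$ and $\sigma=\sigma'\cdot d$: $\sigma:=\sigma'$, $rv(k)=d$, $cp(k)=R_2$. $lin(deq,\mathtt{EMPTY},k)$ if $cp(k)=R_1$ and $\sigma=\epsilon$: $rv(k)=\mathtt{EMPTY}$, $cp(k)=R_2$. $ret(deq,d,k)$ if $cp(k)=R_2$ and $rv(k)=d$: $cp(k)=R_3$. $AbsQ$: alphabet $C\cup R\cup Lin(deq)$ where $Lin(deq)=\{lin(deq,d,k)\}$. States are tuples $(O,<,\ell,rv,cp)$ with $O\subseteq\mathit{Ops}$, $<$ a strict partial order on $O$, $\ell:O\to\mathit{Vals}\times\{\mathtt{PEND},\mathtt{COMP}\}$ (write $\ell_1,\ell_2$ for its components), $rv:\mathit{Ops}\rightharpoonup\mathit{Vals}$, $cp:\mathit{Ops}\rightharpoonup\{A_1,A_2,R_1,R_2,R_3\}$; all components empty initially. Let $\mathtt{COMP}(O)=\{k\in O:\ell_2(k)=\mathtt{COMP}\}$, $min(O)$ the $<$-minimal elements of $O$, and $<\uparrow k'$ the relation $<$ with all pairs containing $k'$ removed. Transitions: $inv(enq,d,k)$ if $k\notin dom(cp)$, $d\ne\mathtt{EMPTY}$: $O:=O\cup\{k\}$, $<:=<\cup(\mathtt{COMP}(O)\times\{k\})$,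 $\ell(k)=(d,\mathtt{PEND})$, $cp(k)=A_1$. $inv(deq,k)$ if $k\notin dom(cp)$: $cp(k)=R_1$. $ret(deq,d,k)$ if $cp(k)=R_2$, $rv(k)=d$: $cp(k)=R_3$. $ret(enq,k)$ if $cp(k)=A_1$, $k\in O$, $\ell(k)=(d,\mathtt{PEND})$: $\ell(k)=(d,\mathtt{COMP})$, $cp(k)=A_2$. $ret(enq,k)$ if $cp(k)=A_1$, $k\notin O$: $cp(k)=A_2$. $lin(deq,d,k)$ if $cp(k)=R_1$, $d\ne\mathtt{EMPTY}$, and some $k'\in min(O)$ has $\ell_1(k')=d$: $O:=O\setminus\{k'\}$, $<:=<\uparrow k'$, $rv(k)=d$, $cp(k)=R_2$. $lin(deq,\mathtt{EMPTY},k)$ if $cp(k)=R_1$ and $\ell_2(o)=\mathtt{PEND}$ for all $o\in O$: $rv(k)=\mathtt{EMPTY}$, $cp(k)=R_2$. *)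

theory Defs
  imports Main
begin

record ('s, 'a) lts =
  init :: 's
  step :: "'s \<Rightarrow> 'a \<Rightarrow> 's \<Rightarrow> bool"

inductive execs :: "('s, 'a) lts \<Rightarrow> 'a list \<Rightarrow> 's \<Rightarrow> bool" for L where
  execs_nil: "execs L [] (init L)"
| execs_snoc: "execs L tr s \<Longrightarrow> step L s a s' \<Longrightarrow> execs L (tr @ [a]) s'"

definition traces :: "('s, 'a) lts \<Rightarrow> 'a list set" where
  "traces L = {tr. \<exists>s. execs L tr s}"

datatype 'v act =
    InvEnq 'v nat
  | RetEnq nat
  | InvDeq nat
  | RetDeq 'v nat
  | LinEnq 'v nat
  | LinDeq 'v nat

fun is_call_ret :: "'v act \<Rightarrow> bool" where
  "is_call_ret (InvEnq d k) = True"
| "is_call_ret (RetEnq k) = True"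
| "is_call_ret (InvDeq k) = True"
| "is_call_ret (RetDeq d k) = True"
| "is_call_ret (LinEnq d k) = False"
| "is_call_ret (LinDeq d k) = False"

definition hist :: "('s, 'v act) lts \<Rightarrow> 'v act list set" where
  "hist L = filter is_call_ret ` traces L"

definition refines :: "('s, 'v act) lts \<Rightarrow> ('t, 'v act) lts \<Rightarrow> bool" where
  "refines L1 L2 \<longleftrightarrow> hist L1 \<subseteq> hist L2"

datatype cpl = A1 | A | A2 | R1 | R2 | R3

(* state: (sigma, in, rv, cp); sigma = d \<cdot> sigma' is  d # sigma' *)
type_synonym 'v q0state = "'v list \<times> (nat \<rightharpoonup> 'v) \<times> (nat \<rightharpoonup> 'v) \<times> (nat \<rightharpoonup> cpl)"

inductive q0step :: "'v \<Rightarrow> 'v q0state \<Rightarrow> 'v act \<Rightarrow> 'v q0state \<Rightarrow> bool" for EMPTY where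
  "k \<notin> dom cp \<Longrightarrow> d \<noteq> EMPTY \<Longrightarrow>
     q0step EMPTY (\<sigma>, inn, rv, cp) (InvEnq d k) (\<sigma>, inn(k \<mapsto> d), rv, cp(k \<mapsto> A1))"
| "cp k = Some A1 \<Longrightarrow> inn k = Some d \<Longrightarrow>
     q0step EMPTY (\<sigma>, inn, rv, cp) (LinEnq d k) (d # \<sigma>, inn, rv, cp(k \<mapsto> A))"
| "cp k = Some A \<Longrightarrow>
     q0step EMPTY (\<sigma>, inn, rv, cp) (RetEnq k) (\<sigma>, inn, rv, cp(k \<mapsto> A2))"
| "k \<notin> dom cp \<Longrightarrow>
     q0step EMPTY (\<sigma>, inn, rv, cp) (InvDeq k) (\<sigma>, inn, rv, cp(k \<mapsto> R1))"
| "cp k = Some R1 \<Longrightarrow>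
     q0step EMPTY (\<sigma>' @ [d], inn, rv, cp) (LinDeq d k) (\<sigma>', inn, rv(k \<mapsto> d), cp(k \<mapsto> R2))"
| "cp k = Some R1 \<Longrightarrow>
     q0step EMPTY ([], inn, rv, cp) (LinDeq EMPTY k) ([], inn, rv(k \<mapsto> EMPTY), cp(k \<mapsto> R2))"
| "cp k = Some R2 \<Longrightarrow> rv k = Some d \<Longrightarrow>
     q0step EMPTY (\<sigma>, inn, rv, cp) (RetDeq d k) (\<sigma>, inn, rv, cp(k \<mapsto> R3))"

definition AbsQ0 :: "'v \<Rightarrow> ('v q0state, 'v act) lts" where
  "AbsQ0 EMPTY = \<lparr> init = ([], Map.empty, Map.empty, Map.empty), step = q0step EMPTY \<rparr>"

datatype status = PEND | COMP

(* state: (O, <, l, rv, cp); < is a relation on O given as a set of pairs (a,b) meaning a < b;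
   l is a partial map whose domain is O *)
type_synonym 'v qstate =
  "nat set \<times> (nat \<times> nat) set \<times> (nat \<rightharpoonup> 'v \<times> status) \<times> (nat \<rightharpoonup> 'v) \<times> (nat \<rightharpoonup> cpl)"

definition COMPs :: "nat set \<Rightarrow> (nat \<rightharpoonup> 'v \<times> status) \<Rightarrow> nat set" where
  "COMPs Os l = {k \<in> Os. \<exists>d. l k = Some (d, COMP)}"

definition minset :: "nat set \<Rightarrow> (nat \<times> nat) set \<Rightarrow> nat set" where
  "minset Os R = {k \<in> Os. \<forall>j \<in> Os. (j, k) \<notin> R}"

definition remove_from :: "(nat \<times> nat) set \<Rightarrow> nat \<Rightarrow> (nat \<times> nat) set" where
  "remove_from R k' = {(a, b) \<in> R. a \<noteq> k' \<and> b \<noteq> k'}"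

inductive qstep :: "'v \<Rightarrow> 'v qstate \<Rightarrow> 'v act \<Rightarrow> 'v qstate \<Rightarrow> bool" for EMPTY where
  "k \<notin> dom cp \<Longrightarrow> d \<noteq> EMPTY \<Longrightarrow>
     qstep EMPTY (Os, R, l, rv, cp) (InvEnq d k)
       (Os \<union> {k}, R \<union> (COMPs Os l \<times> {k}), l(k \<mapsto> (d, PEND)), rv, cp(k \<mapsto> A1))"
| "k \<notin> dom cp \<Longrightarrow>
     qstep EMPTY (Os, R, l, rv, cp) (InvDeq k) (Os, R, l, rv, cp(k \<mapsto> R1))"
| "cp k = Some R2 \<Longrightarrow> rv k = Some d \<Longrightarrow>
     qstep EMPTY (Os, R, l, rv, cp) (RetDeq d k) (Os, R, l, rv, cp(k \<mapsto> R3))"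
| "cp k = Some A1 \<Longrightarrow> k \<in> Os \<Longrightarrow> l k = Some (d, PEND) \<Longrightarrow>
     qstep EMPTY (Os, R, l, rv, cp) (RetEnq k) (Os, R, l(k \<mapsto> (d, COMP)), rv, cp(k \<mapsto> A2))"
| "cp k = Some A1 \<Longrightarrow> k \<notin> Os \<Longrightarrow>
     qstep EMPTY (Os, R, l, rv, cp) (RetEnq k) (Os, R, l, rv, cp(k \<mapsto> A2))"
| "cp k = Some R1 \<Longrightarrow> d \<noteq> EMPTY \<Longrightarrow> k' \<in> minset Os R \<Longrightarrow> l k' = Some (d, st) \<Longrightarrow>
     qstep EMPTY (Os, R, l, rv, cp) (LinDeq d k)
       (Os - {k'}, remove_from R k', l(k' := None), rv(k \<mapsto> d), cp(k \<mapsto> R2))"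
| "cp k = Some R1 \<Longrightarrow> (\<forall>o' \<in> Os. \<exists>d. l o' = Some (d, PEND)) \<Longrightarrow>
     qstep EMPTY (Os, R, l, rv, cp) (LinDeq EMPTY k) (Os, R, l, rv(k \<mapsto> EMPTY), cp(k \<mapsto> R2))"

definition AbsQ :: "'v \<Rightarrow> ('v qstate, 'v act) lts" where
  "AbsQ EMPTY = \<lparr> init = ({}, {}, Map.empty, Map.empty, Map.empty), step = qstep EMPTY \<rparr>"

end

theory Submission
  imports Defs
begin

text \<open>AbsQ0 linearizes every enqueue at an explicit step. AbsQ keeps instead the pool of enqueues
  not yet dequeued with the real-time order R (completed before invoked) and may dequeue any
  R-minimal element. AbsQ simulates AbsQ0 step by step, a linearization of an enqueue being
  invisible to AbsQ: since R only points from completed to later enqueues, the AbsQ0 queue never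
  contradicts R and its oldest element is R-minimal. Conversely AbsQ0 simulates AbsQ backwards:
  every list of pool elements that contains all completed enqueues and is compatible with R is the
  queue of an AbsQ0 execution with the same history, in which pending enqueues are linearized as
  late as that list allows.\<close>

section \<open>Simulations of labelled transition systems\<close>

lemma refinesI:
  assumes "\<And>tr s. execs L1 tr s \<Longrightarrow>
             \<exists>tr' s'. execs L2 tr' s' \<and> filter is_call_ret tr' = filter is_call_ret tr"
  shows "refines L1 L2"
proof -
  have "filter is_call_ret tr \<in> hist L2" if "execs L1 tr s" for tr s
    using assms[OF that] unfolding hist_def traces_def by (metis (mono_tags) image_eqI mem_Collect_eq)
  then show ?thesis unfolding refines_def hist_def[of L1] traces_def by blast
qed

lemma refines_by_forward_simulation:
  assumes init: "S (init L1) (init L2)"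
    and sim: "\<And>s1 s2 a s1'. S s1 s2 \<Longrightarrow> step L1 s1 a s1' \<Longrightarrow>
               \<exists>s2'. S s1' s2' \<and> (s2' = s2 \<and> \<not> is_call_ret a \<or> step L2 s2 a s2')"
  shows "refines L1 L2"
proof (rule refinesI)
  fix tr s1
  assume "execs L1 tr s1"
  then have "\<exists>tr' s2. execs L2 tr' s2 \<and> S s1 s2 \<and> filter is_call_ret tr' = filter is_call_ret tr"
  proof (induction rule: execs.induct)
    case execs_nil
    then show ?case using init execs.execs_nil by fastforce
  next
    case (execs_snoc tr s1 a s1')
    then obtain tr' s2 where IH: "execs L2 tr' s2" "S s1 s2"
        "filter is_call_ret tr' = filter is_call_ret tr" by blast
    from sim[OF IH(2) execs_snoc(2)] obtain s2' where
      "S s1' s2'" and "s2' = s2 \<and> \<not> is_call_ret a \<or> step L2 s2 a s2'" by blast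
    then show ?case
      using IH execs.execs_snoc[OF IH(1)] by fastforce
  qed
  then show "\<exists>tr' s2. execs L2 tr' s2 \<and> filter is_call_ret tr' = filter is_call_ret tr"
    by blast
qed

inductive lts_path :: "('s, 'a) lts \<Rightarrow> 's \<Rightarrow> 'a list \<Rightarrow> 's \<Rightarrow> bool" for L where
  path_nil: "lts_path L s [] s"
| path_cons: "step L s a s' \<Longrightarrow> lts_path L s' ws s'' \<Longrightarrow> lts_path L s (a # ws) s''"

lemma lts_path_append:
  "lts_path L s ws s' \<Longrightarrow> lts_path L s' vs s'' \<Longrightarrow> lts_path L s (ws @ vs) s''"
  by (induction rule: lts_path.induct) (auto intro: lts_path.intros)

lemma execs_lts_path:
  "lts_path L s ws s' \<Longrightarrow> execs L tr s \<Longrightarrow> execs L (tr @ ws) s'"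
proof (induction arbitrary: tr rule: lts_path.induct)
  case (path_cons s a s' ws s'')
  then show ?case using execs.execs_snoc[of L tr s a s'] by fastforce
qed simp

lemma q0step_path_cons:
  "q0step E t a t' \<Longrightarrow> lts_path (AbsQ0 E) t' ws t'' \<Longrightarrow> lts_path (AbsQ0 E) t (a # ws) t''"
  by (rule path_cons) (simp_all add: AbsQ0_def)

lemma q0step_path: "q0step E t a t' \<Longrightarrow> lts_path (AbsQ0 E) t [a] t'"
  by (blast intro: q0step_path_cons path_nil)

section \<open>AbsQ simulates AbsQ0\<close>

text \<open>The list ids holds the enqueues whose values form the AbsQ0 queue, newest first; the AbsQ
  pool consists of these together with the enqueues not yet linearized in AbsQ0. An AbsQ0 enqueue that is linearized but has not returned is still
  in state A1 for AbsQ, so lin(enq) is a stuttering step.\<close>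

fun fwd_sim :: "'v \<Rightarrow> nat list \<Rightarrow> 'v q0state \<Rightarrow> 'v qstate \<Rightarrow> bool" where
  "fwd_sim E ids (\<sigma>, inn, rv0, cp0) (Os, R, l, rv, cp) \<longleftrightarrow>
     distinct ids \<and> \<sigma> = map (\<lambda>k. the (inn k)) ids \<and>
     (\<forall>k\<in>set ids. cp0 k = Some A \<or> cp0 k = Some A2) \<and>
     (\<forall>k. (cp0 k = Some A1 \<or> cp0 k = Some A \<or> cp0 k = Some A2) \<longleftrightarrow> k \<in> dom inn) \<and>
     (\<forall>k d. inn k = Some d \<longrightarrow> d \<noteq> E) \<and>
     Os = {k. cp0 k = Some A1} \<union> set ids \<and>
     l = (\<lambda>k. if k \<in> Os then Some (the (inn k), if cp0 k = Some A2 then COMP else PEND) else None) \<and>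
     rv = rv0 \<and>
     cp = (\<lambda>k. if cp0 k = Some A then Some A1 else cp0 k) \<and>
     (\<forall>a b. (a, b) \<in> R \<longrightarrow> a \<in> set ids \<and> b \<in> Os \<and> a \<noteq> b) \<and>
     sorted_wrt (\<lambda>x y. (x, y) \<notin> R) ids"

declare fwd_sim.simps [simp del]

lemma last_in_minset:
  assumes "sorted_wrt (\<lambda>x y. (x, y) \<notin> R) (xs @ [k])"
    and "\<forall>a b. (a, b) \<in> R \<longrightarrow> a \<in> set (xs @ [k]) \<and> a \<noteq> b"
    and "k \<in> Os"
  shows "k \<in> minset Os R"
  using assms by (fastforce simp: minset_def sorted_wrt_append)

lemma fwd_sim_InvEnq:
  assumes F: "fwd_sim E ids (\<sigma>, inn, rv0, cp0) (Os, R, l, rv, cp)"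
    and k: "k \<notin> dom cp0" and d: "d \<noteq> E"
  shows "\<exists>s'. fwd_sim E ids (\<sigma>, inn(k \<mapsto> d), rv0, cp0(k \<mapsto> A1)) s'
              \<and> qstep E (Os, R, l, rv, cp) (InvEnq d k) s'"
proof -
  note H = F[unfolded fwd_sim.simps]
  have kids: "k \<notin> set ids" using H k by auto
  have "k \<notin> dom cp" using H k by auto
  then have st: "qstep E (Os, R, l, rv, cp) (InvEnq d k)
      (Os \<union> {k}, R \<union> COMPs Os l \<times> {k}, l(k \<mapsto> (d, PEND)), rv, cp(k \<mapsto> A1))"
    using d by (rule qstep.intros(1))
  have CO: "COMPs Os l \<subseteq> set ids" using H by (auto simp: COMPs_def split: if_splits)
  have "fwd_sim E ids (\<sigma>, inn(k \<mapsto> d), rv0, cp0(k \<mapsto> A1))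
      (Os \<union> {k}, R \<union> COMPs Os l \<times> {k}, l(k \<mapsto> (d, PEND)), rv, cp(k \<mapsto> A1))"
    unfolding fwd_sim.simps
  proof (intro conjI)
    show "\<sigma> = map (\<lambda>j. the ((inn(k \<mapsto> d)) j)) ids" using H kids by auto
    show "\<forall>j\<in>set ids. (cp0(k \<mapsto> A1)) j = Some A \<or> (cp0(k \<mapsto> A1)) j = Some A2" using H kids by auto
    show "\<forall>j. ((cp0(k \<mapsto> A1)) j = Some A1 \<or> (cp0(k \<mapsto> A1)) j = Some A \<or> (cp0(k \<mapsto> A1)) j = Some A2)
              \<longleftrightarrow> j \<in> dom (inn(k \<mapsto> d))"
      using H by auto
    show "\<forall>j e. (inn(k \<mapsto> d)) j = Some e \<longrightarrow> e \<noteq> E" using H d by auto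
    show "Os \<union> {k} = {j. (cp0(k \<mapsto> A1)) j = Some A1} \<union> set ids" using H kids k by auto
    show "l(k \<mapsto> (d, PEND)) = (\<lambda>j. if j \<in> Os \<union> {k} then Some (the ((inn(k \<mapsto> d)) j),
            if (cp0(k \<mapsto> A1)) j = Some A2 then COMP else PEND) else None)"
      using H by (auto simp: fun_eq_iff)
    show "cp(k \<mapsto> A1) = (\<lambda>j. if (cp0(k \<mapsto> A1)) j = Some A then Some A1 else (cp0(k \<mapsto> A1)) j)"
      using H by (auto simp: fun_eq_iff)
    show "\<forall>a b. (a, b) \<in> R \<union> COMPs Os l \<times> {k} \<longrightarrow> a \<in> set ids \<and> b \<in> Os \<union> {k} \<and> a \<noteq> b"
      using H CO kids by auto
    show "sorted_wrt (\<lambda>x y. (x, y) \<notin> R \<union> COMPs Os l \<times> {k}) ids"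
      using H kids by (auto simp: sorted_wrt_iff_nth_less)
  qed (use H in auto)
  with st show ?thesis by blast
qed

lemma fwd_sim_LinEnq:
  assumes F: "fwd_sim E ids (\<sigma>, inn, rv0, cp0) (Os, R, l, rv, cp)"
    and k: "cp0 k = Some A1" and d: "inn k = Some d"
  shows "fwd_sim E (k # ids) (d # \<sigma>, inn, rv0, cp0(k \<mapsto> A)) (Os, R, l, rv, cp)"
proof -
  note H = F[unfolded fwd_sim.simps]
  have kids: "k \<notin> set ids" using H k by auto
  show ?thesis unfolding fwd_sim.simps
  proof (intro conjI)
    show "Os = {j. (cp0(k \<mapsto> A)) j = Some A1} \<union> set (k # ids)" using H k by auto
    show "l = (\<lambda>j. if j \<in> Os then Some (the (inn j),
            if (cp0(k \<mapsto> A)) j = Some A2 then COMP else PEND) else None)"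
      using H k by (auto simp: fun_eq_iff)
    show "cp = (\<lambda>j. if (cp0(k \<mapsto> A)) j = Some A then Some A1 else (cp0(k \<mapsto> A)) j)"
      using H k by (auto simp: fun_eq_iff)
    show "sorted_wrt (\<lambda>x y. (x, y) \<notin> R) (k # ids)" using H kids by auto
  qed (use H kids k d in auto)
qed

lemma fwd_sim_RetEnq:
  assumes F: "fwd_sim E ids (\<sigma>, inn, rv0, cp0) (Os, R, l, rv, cp)" and k: "cp0 k = Some A"
  shows "\<exists>s'. fwd_sim E ids (\<sigma>, inn, rv0, cp0(k \<mapsto> A2)) s' \<and> qstep E (Os, R, l, rv, cp) (RetEnq k) s'"
proof (cases "k \<in> set ids")
  case True
  note H = F[unfolded fwd_sim.simps]
  let ?l' = "l(k \<mapsto> (the (inn k), COMP))"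
  have st: "qstep E (Os, R, l, rv, cp) (RetEnq k) (Os, R, ?l', rv, cp(k \<mapsto> A2))"
    by (rule qstep.intros(4)) (use H k True in auto)
  have "fwd_sim E ids (\<sigma>, inn, rv0, cp0(k \<mapsto> A2)) (Os, R, ?l', rv, cp(k \<mapsto> A2))"
    unfolding fwd_sim.simps
  proof (intro conjI)
    show "Os = {j. (cp0(k \<mapsto> A2)) j = Some A1} \<union> set ids" using H k by auto
    show "?l' = (\<lambda>j. if j \<in> Os then Some (the (inn j),
            if (cp0(k \<mapsto> A2)) j = Some A2 then COMP else PEND) else None)"
      using H k True by (auto simp: fun_eq_iff)
    show "cp(k \<mapsto> A2) = (\<lambda>j. if (cp0(k \<mapsto> A2)) j = Some A then Some A1 else (cp0(k \<mapsto> A2)) j)"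
      using H k by (auto simp: fun_eq_iff)
  qed (use H k True in auto)
  with st show ?thesis by blast
next
  case False
  note H = F[unfolded fwd_sim.simps]
  have st: "qstep E (Os, R, l, rv, cp) (RetEnq k) (Os, R, l, rv, cp(k \<mapsto> A2))"
    by (rule qstep.intros(5)) (use H k False in auto)
  have "fwd_sim E ids (\<sigma>, inn, rv0, cp0(k \<mapsto> A2)) (Os, R, l, rv, cp(k \<mapsto> A2))"
    unfolding fwd_sim.simps
  proof (intro conjI)
    show "Os = {j. (cp0(k \<mapsto> A2)) j = Some A1} \<union> set ids" using H k by auto
    show "l = (\<lambda>j. if j \<in> Os then Some (the (inn j),
            if (cp0(k \<mapsto> A2)) j = Some A2 then COMP else PEND) else None)"
      using H k False by (auto simp: fun_eq_iff)
    show "cp(k \<mapsto> A2) = (\<lambda>j. if (cp0(k \<mapsto> A2)) j = Some A then Some A1 else (cp0(k \<mapsto> A2)) j)"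
      using H k by (auto simp: fun_eq_iff)
  qed (use H k False in auto)
  with st show ?thesis by blast
qed

lemma fwd_sim_deq_update:
  assumes F: "fwd_sim E ids (\<sigma>, inn, rv0, cp0) (Os, R, l, rv, cp)"
    and k: "cp0 k \<notin> Some ` {A1, A, A2}" and c: "c \<notin> {A1, A, A2}"
  shows "fwd_sim E ids (\<sigma>, inn, rv', cp0(k \<mapsto> c)) (Os, R, l, rv', cp(k \<mapsto> c))"
proof -
  note H = F[unfolded fwd_sim.simps]
  have kids: "k \<notin> set ids" and knn: "k \<notin> dom inn" using H k by auto
  show ?thesis unfolding fwd_sim.simps
  proof (intro conjI)
    show "Os = {j. (cp0(k \<mapsto> c)) j = Some A1} \<union> set ids" using H k c by auto
    show "l = (\<lambda>j. if j \<in> Os then Some (the (inn j),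
            if (cp0(k \<mapsto> c)) j = Some A2 then COMP else PEND) else None)"
      using H k kids by (auto simp: fun_eq_iff)
    show "cp(k \<mapsto> c) = (\<lambda>j. if (cp0(k \<mapsto> c)) j = Some A then Some A1 else (cp0(k \<mapsto> c)) j)"
      using H c by (auto simp: fun_eq_iff)
  qed (use H c kids knn in auto)
qed

lemma fwd_sim_rv_cp:
  assumes "fwd_sim E ids (\<sigma>, inn, rv0, cp0) (Os, R, l, rv, cp)"
  shows "rv = rv0" and "cp0 k \<noteq> Some A \<Longrightarrow> cp k = cp0 k"
  using assms by (auto simp: fwd_sim.simps)

lemma fwd_sim_InvDeq:
  assumes F: "fwd_sim E ids (\<sigma>, inn, rv0, cp0) (Os, R, l, rv, cp)" and k: "k \<notin> dom cp0"
  shows "\<exists>s'. fwd_sim E ids (\<sigma>, inn, rv0, cp0(k \<mapsto> R1)) s' \<and> qstep E (Os, R, l, rv, cp) (InvDeq k) s'"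
proof -
  have "k \<notin> dom cp" using fwd_sim_rv_cp[OF F] k by auto
  then have "qstep E (Os, R, l, rv, cp) (InvDeq k) (Os, R, l, rv, cp(k \<mapsto> R1))"
    by (rule qstep.intros(2))
  moreover have "fwd_sim E ids (\<sigma>, inn, rv0, cp0(k \<mapsto> R1)) (Os, R, l, rv, cp(k \<mapsto> R1))"
    using fwd_sim_deq_update[OF F, of k R1 rv0] fwd_sim_rv_cp[OF F] k by auto
  ultimately show ?thesis by blast
qed

lemma fwd_sim_RetDeq:
  assumes F: "fwd_sim E ids (\<sigma>, inn, rv0, cp0) (Os, R, l, rv, cp)"
    and k: "cp0 k = Some R2" "rv0 k = Some d"
  shows "\<exists>s'. fwd_sim E ids (\<sigma>, inn, rv0, cp0(k \<mapsto> R3)) s' \<and> qstep E (Os, R, l, rv, cp) (RetDeq d k) s'"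
proof -
  have "qstep E (Os, R, l, rv, cp) (RetDeq d k) (Os, R, l, rv, cp(k \<mapsto> R3))"
    by (rule qstep.intros(3)) (use fwd_sim_rv_cp[OF F] k in auto)
  moreover have "fwd_sim E ids (\<sigma>, inn, rv0, cp0(k \<mapsto> R3)) (Os, R, l, rv, cp(k \<mapsto> R3))"
    using fwd_sim_deq_update[OF F, of k R3 rv0] fwd_sim_rv_cp[OF F] k by auto
  ultimately show ?thesis by blast
qed

lemma fwd_sim_LinDeq_EMPTY:
  assumes F: "fwd_sim E ids ([], inn, rv0, cp0) (Os, R, l, rv, cp)" and k: "cp0 k = Some R1"
  shows "\<exists>s'. fwd_sim E ids ([], inn, rv0(k \<mapsto> E), cp0(k \<mapsto> R2)) s'
              \<and> qstep E (Os, R, l, rv, cp) (LinDeq E k) s'"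
proof -
  note H = F[unfolded fwd_sim.simps]
  have "qstep E (Os, R, l, rv, cp) (LinDeq E k) (Os, R, l, rv(k \<mapsto> E), cp(k \<mapsto> R2))"
    by (rule qstep.intros(7)) (use H k in auto)
  moreover have "fwd_sim E ids ([], inn, rv0(k \<mapsto> E), cp0(k \<mapsto> R2)) (Os, R, l, rv(k \<mapsto> E), cp(k \<mapsto> R2))"
    using fwd_sim_deq_update[OF F, of k R2 "rv0(k \<mapsto> E)"] fwd_sim_rv_cp[OF F] k by auto
  ultimately show ?thesis by blast
qed

lemma fwd_sim_LinDeq:
  assumes F: "fwd_sim E ids (\<sigma>' @ [d], inn, rv0, cp0) (Os, R, l, rv, cp)" and k: "cp0 k = Some R1"
  shows "\<exists>ids' s'. fwd_sim E ids' (\<sigma>', inn, rv0(k \<mapsto> d), cp0(k \<mapsto> R2)) s'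
                   \<and> qstep E (Os, R, l, rv, cp) (LinDeq d k) s'"
proof -
  note H = F[unfolded fwd_sim.simps]
  obtain ids0 k' where ids: "ids = ids0 @ [k']"
    using H by (metis Nil_is_map_conv snoc_eq_iff_butlast)
  have dk: "d = the (inn k')" and k'cp: "cp0 k' = Some A \<or> cp0 k' = Some A2"
    and k'Os: "k' \<in> Os" using H ids by auto
  have kk': "k \<noteq> k'" using k k'cp by auto
  have "(cp0 k = Some A1 \<or> cp0 k = Some A \<or> cp0 k = Some A2) \<longleftrightarrow> k \<in> dom inn"
    using H by blast
  then have knn: "k \<notin> dom inn" using k by simp
  have "d \<noteq> E" using H k'cp dk by (metis domD option.sel)
  moreover have "k' \<in> minset Os R" using H ids k'Os by (intro last_in_minset) auto
  moreover have "l k' = Some (d, if cp0 k' = Some A2 then COMP else PEND)" using H k'Os dk by auto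
  ultimately have "qstep E (Os, R, l, rv, cp) (LinDeq d k)
      (Os - {k'}, remove_from R k', l(k' := None), rv(k \<mapsto> d), cp(k \<mapsto> R2))"
    using H k by (intro qstep.intros(6)) auto
  moreover have "fwd_sim E ids0 (\<sigma>', inn, rv0(k \<mapsto> d), cp0(k \<mapsto> R2))
      (Os - {k'}, remove_from R k', l(k' := None), rv(k \<mapsto> d), cp(k \<mapsto> R2))"
    unfolding fwd_sim.simps
  proof (intro conjI)
    show "Os - {k'} = {j. (cp0(k \<mapsto> R2)) j = Some A1} \<union> set ids0" using H k k'cp ids by auto
    show "l(k' := None) = (\<lambda>j. if j \<in> Os - {k'} then Some (the (inn j),
            if (cp0(k \<mapsto> R2)) j = Some A2 then COMP else PEND) else None)"
      using H k kk' by (auto simp: fun_eq_iff)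
    show "cp(k \<mapsto> R2) = (\<lambda>j. if (cp0(k \<mapsto> R2)) j = Some A then Some A1 else (cp0(k \<mapsto> R2)) j)"
      using H k by (auto simp: fun_eq_iff)
    show "\<forall>a b. (a, b) \<in> remove_from R k' \<longrightarrow> a \<in> set ids0 \<and> b \<in> Os - {k'} \<and> a \<noteq> b"
      using H ids by (auto simp: remove_from_def)
    show "sorted_wrt (\<lambda>x y. (x, y) \<notin> remove_from R k') ids0"
      using H ids by (auto simp: remove_from_def sorted_wrt_append elim: sorted_wrt_mono_rel[rotated])
  qed (use H k knn ids in auto)
  ultimately show ?thesis by blast
qed

lemma fwd_sim_step:
  assumes F: "fwd_sim E ids t s" and st: "q0step E t a t'"
  shows "\<exists>ids' s'. fwd_sim E ids' t' s' \<and> (s' = s \<and> \<not> is_call_ret a \<or> qstep E s a s')"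
proof -
  obtain Os R l rv cp where s: "s = (Os, R, l, rv, cp)" by (cases s)
  from st show ?thesis
  proof cases
    case (1 k cp0 d \<sigma> inn rv0)
    from fwd_sim_InvEnq[OF F[unfolded 1(1) s] 1(4,5)] show ?thesis unfolding 1(2,3) s by blast
  next
    case (2 cp0 k inn d \<sigma> rv0)
    from fwd_sim_LinEnq[OF F[unfolded 2(1) s] 2(4,5)] show ?thesis
      unfolding 2(2,3) s by (metis is_call_ret.simps(5))
  next
    case (3 cp0 k \<sigma> inn rv0)
    from fwd_sim_RetEnq[OF F[unfolded 3(1) s] 3(4)] show ?thesis unfolding 3(2,3) s by blast
  next
    case (4 k cp0 \<sigma> inn rv0)
    from fwd_sim_InvDeq[OF F[unfolded 4(1) s] 4(4)] show ?thesis unfolding 4(2,3) s by blast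
  next
    case (5 cp0 k \<sigma>' d inn rv0)
    from fwd_sim_LinDeq[OF F[unfolded 5(1) s] 5(4)] show ?thesis unfolding 5(2,3) s by blast
  next
    case (6 cp0 k inn rv0)
    from fwd_sim_LinDeq_EMPTY[OF F[unfolded 6(1) s] 6(4)] show ?thesis unfolding 6(2,3) s by blast
  next
    case (7 cp0 k rv0 d \<sigma> inn)
    from fwd_sim_RetDeq[OF F[unfolded 7(1) s] 7(4,5)] show ?thesis unfolding 7(2,3) s by blast
  qed
qed

lemma AbsQ0_refines_AbsQ: "refines (AbsQ0 E) (AbsQ E)"
proof (rule refines_by_forward_simulation[where S = "\<lambda>t s. \<exists>ids. fwd_sim E ids t s"])
  show "\<exists>ids. fwd_sim E ids (init (AbsQ0 E)) (init (AbsQ E))"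
    by (auto simp: AbsQ0_def AbsQ_def fwd_sim.simps fun_eq_iff intro!: exI[of _ "[]"])
  show "\<exists>s'. (\<exists>ids. fwd_sim E ids t' s') \<and> (s' = s \<and> \<not> is_call_ret a \<or> step (AbsQ E) s a s')"
    if "\<exists>ids. fwd_sim E ids t s" and "step (AbsQ0 E) t a t'" for t s a t'
    using that fwd_sim_step[of E _ t s a t'] unfolding AbsQ0_def AbsQ_def by simp blast
qed

section \<open>An invariant of AbsQ\<close>

fun record_enq :: "(nat \<rightharpoonup> 'v) \<Rightarrow> 'v act \<Rightarrow> (nat \<rightharpoonup> 'v)" where
  "record_enq inn (InvEnq d k) = inn(k \<mapsto> d)"
| "record_enq inn _ = inn"

text \<open>The map inn records the arguments of all invoked enqueues, which AbsQ forgets once an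
  enqueue is dequeued. The last conjunct makes R acyclic on completed enqueues.\<close>

fun qinv :: "(nat \<rightharpoonup> 'v) \<Rightarrow> 'v qstate \<Rightarrow> bool" where
  "qinv inn (Os, R, l, rv, cp) \<longleftrightarrow>
     (\<forall>k\<in>Os. (\<exists>d. l k = Some (d, PEND) \<and> cp k = Some A1) \<or> (\<exists>d. l k = Some (d, COMP) \<and> cp k = Some A2)) \<and>
     (\<forall>a b. (a, b) \<in> R \<longrightarrow> a \<in> COMPs Os l) \<and>
     (\<forall>k. inn k \<noteq> None \<longrightarrow> cp k = Some A1 \<or> cp k = Some A2) \<and>
     (\<forall>k\<in>Os. inn k = Some (fst (the (l k)))) \<and>
     (\<exists>L. distinct L \<and> set L = COMPs Os l \<and> sorted_wrt (\<lambda>x y. (x, y) \<notin> R) L)"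

declare qinv.simps [simp del]

lemma qinv_cp:
  assumes "qinv inn (Os, R, l, rv, cp)" and "k \<in> Os \<or> inn k \<noteq> None"
  shows "cp k = Some A1 \<or> cp k = Some A2"
  using assms by (auto simp: qinv.simps)

lemma qinv_InvEnq:
  assumes I: "qinv inn (Os, R, l, rv, cp)" and k: "k \<notin> dom cp"
  shows "qinv (inn(k \<mapsto> d)) (Os \<union> {k}, R \<union> COMPs Os l \<times> {k}, l(k \<mapsto> (d, PEND)), rv, cp(k \<mapsto> A1))"
proof -
  note H = I[unfolded qinv.simps]
  have kOs: "k \<notin> Os" using H k by fastforce
  then have CO: "COMPs (Os \<union> {k}) (l(k \<mapsto> (d, PEND))) = COMPs Os l" by (auto simp: COMPs_def)
  from H obtain L where L: "distinct L" "set L = COMPs Os l" "sorted_wrt (\<lambda>x y. (x, y) \<notin> R) L"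
    by blast
  have kL: "k \<notin> set L" using L kOs by (auto simp: COMPs_def)
  show ?thesis unfolding qinv.simps CO
  proof (intro conjI)
    show "\<exists>L. distinct L \<and> set L = COMPs Os l \<and> sorted_wrt (\<lambda>x y. (x, y) \<notin> R \<union> COMPs Os l \<times> {k}) L"
      using L kL by (auto intro!: exI[of _ L] elim!: sorted_wrt_mono_rel[rotated])
    show "\<forall>a b. (a, b) \<in> R \<union> COMPs Os l \<times> {k} \<longrightarrow> a \<in> COMPs Os l" using H by auto
  qed (use H kOs in auto)
qed

lemma qinv_RetEnq:
  assumes I: "qinv inn (Os, R, l, rv, cp)" and k: "cp k = Some A1" "k \<in> Os" "l k = Some (d, PEND)"
  shows "qinv inn (Os, R, l(k \<mapsto> (d, COMP)), rv, cp(k \<mapsto> A2))"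
proof -
  note H = I[unfolded qinv.simps]
  from H obtain L where L: "distinct L" "set L = COMPs Os l" "sorted_wrt (\<lambda>x y. (x, y) \<notin> R) L"
    by blast
  have kC: "k \<notin> COMPs Os l" using k by (auto simp: COMPs_def)
  have CO: "COMPs Os (l(k \<mapsto> (d, COMP))) = insert k (COMPs Os l)" using k by (auto simp: COMPs_def)
  show ?thesis unfolding qinv.simps CO
  proof (intro conjI)
    show "\<exists>L. distinct L \<and> set L = insert k (COMPs Os l) \<and> sorted_wrt (\<lambda>x y. (x, y) \<notin> R) L"
      using L kC H by (intro exI[of _ "k # L"]) auto
  qed (use H k in auto)
qed

lemma qinv_LinDeq:
  assumes I: "qinv inn (Os, R, l, rv, cp)" and k: "cp k = Some R1"
  shows "qinv inn (Os - {k'}, remove_from R k', l(k' := None), rv', cp(k \<mapsto> R2))"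
proof -
  note H = I[unfolded qinv.simps]
  have kOs: "k \<notin> Os" using H k by fastforce
  have CO: "COMPs (Os - {k'}) (l(k' := None)) = COMPs Os l - {k'}" by (auto simp: COMPs_def)
  from H obtain L where L: "distinct L" "set L = COMPs Os l" "sorted_wrt (\<lambda>x y. (x, y) \<notin> R) L"
    by blast
  show ?thesis unfolding qinv.simps CO
  proof (intro conjI)
    show "\<exists>L. distinct L \<and> set L = COMPs Os l - {k'} \<and> sorted_wrt (\<lambda>x y. (x, y) \<notin> remove_from R k') L"
    proof (intro exI[of _ "filter (\<lambda>x. x \<noteq> k') L"] conjI)
      have "sorted_wrt (\<lambda>x y. (x, y) \<notin> R) (filter (\<lambda>x. x \<noteq> k') L)" using L(3) by (rule sorted_wrt_filter)
      then show "sorted_wrt (\<lambda>x y. (x, y) \<notin> remove_from R k') (filter (\<lambda>x. x \<noteq> k') L)"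
        by (rule sorted_wrt_mono_rel[rotated]) (auto simp: remove_from_def)
    qed (use L in auto)
    show "\<forall>a b. (a, b) \<in> remove_from R k' \<longrightarrow> a \<in> COMPs Os l - {k'}"
      using H by (auto simp: remove_from_def)
  qed (use H kOs k in auto)
qed

lemma qinv_update_outside:
  assumes "qinv inn (Os, R, l, rv, cp)" and "k \<notin> Os" and "inn k \<noteq> None \<longrightarrow> c = A1 \<or> c = A2"
  shows "qinv inn (Os, R, l, rv', cp(k \<mapsto> c))"
  using assms by (auto simp: qinv.simps)

lemma qinv_step:
  assumes I: "qinv inn s" and st: "qstep E s a s'"
  shows "qinv (record_enq inn a) s'"
  using st
proof cases
  case (1 k cp d Os R l rv)
  then show ?thesis using I qinv_InvEnq[of inn Os R l rv cp k d] by simp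
next
  case (2 k cp Os R l rv)
  then show ?thesis
    using I qinv_cp[of inn Os R l rv cp k] qinv_update_outside[of inn Os R l rv cp k R1 rv] by auto
next
  case (3 cp k rv d Os R l)
  then show ?thesis
    using I qinv_cp[of inn Os R l rv cp k] qinv_update_outside[of inn Os R l rv cp k R3 rv] by auto
next
  case (4 cp k Os l d R rv)
  then show ?thesis using I qinv_RetEnq[of inn Os R l rv cp k d] by simp
next
  case (5 cp k Os R l rv)
  then show ?thesis using I qinv_update_outside[of inn Os R l rv cp k A2 rv] by simp
next
  case (6 cp k d k' Os R l st rv)
  then show ?thesis using I qinv_LinDeq[of inn Os R l rv cp k k' "rv(k \<mapsto> d)"] by simp
next
  case (7 cp k Os l R rv)
  then show ?thesis
    using I qinv_cp[of inn Os R l rv cp k] qinv_update_outside[of inn Os R l rv cp k R2 "rv(k \<mapsto> E)"]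
    by auto
qed

section \<open>AbsQ0 simulates AbsQ\<close>

text \<open>lin_state reads a list ids of pool elements as the AbsQ0 queue, newest first; pending
  enqueues in ids count as linearized, the remaining pending ones as not yet linearized.\<close>

definition val_of :: "(nat \<rightharpoonup> 'v \<times> status) \<Rightarrow> nat \<Rightarrow> 'v" where
  "val_of l k = fst (the (l k))"

fun lin_order :: "'v qstate \<Rightarrow> nat list \<Rightarrow> bool" where
  "lin_order (Os, R, l, rv, cp) ids \<longleftrightarrow>
     distinct ids \<and> set ids \<subseteq> Os \<and> COMPs Os l \<subseteq> set ids \<and> sorted_wrt (\<lambda>x y. (x, y) \<notin> R) ids"

definition lin_cp :: "nat set \<Rightarrow> (nat \<rightharpoonup> cpl) \<Rightarrow> nat list \<Rightarrow> (nat \<rightharpoonup> cpl)" where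
  "lin_cp Os cp ids =
     (\<lambda>k. if cp k = Some A1 then (if k \<in> Os \<and> k \<notin> set ids then Some A1 else Some A) else cp k)"

fun lin_state :: "'v qstate \<Rightarrow> nat list \<Rightarrow> (nat \<rightharpoonup> 'v) \<Rightarrow> 'v q0state" where
  "lin_state (Os, R, l, rv, cp) ids inn = (map (val_of l) ids, inn, rv, lin_cp Os cp ids)"

definition lin_step :: "'v \<Rightarrow> (nat \<rightharpoonup> 'v) \<Rightarrow> 'v qstate \<Rightarrow> 'v act \<Rightarrow> (nat \<rightharpoonup> 'v) \<Rightarrow> 'v qstate \<Rightarrow> nat list \<Rightarrow> bool" where
  "lin_step E inn s a inn' s' ids' \<longleftrightarrow>
     (\<exists>ids ws. lin_order s ids \<and> lts_path (AbsQ0 E) (lin_state s ids inn) ws (lin_state s' ids' inn')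
               \<and> filter is_call_ret ws = filter is_call_ret [a])"

lemma lin_cp_upd: "c \<noteq> A1 \<Longrightarrow> lin_cp Os (cp(k \<mapsto> c)) ids = (lin_cp Os cp ids)(k \<mapsto> c)"
  by (auto simp: lin_cp_def fun_eq_iff)

lemma lin_step_single:
  assumes "lin_order s ids" and "q0step E (lin_state s ids inn) a (lin_state s' ids' inn')"
  shows "lin_step E inn s a inn' s' ids'"
  unfolding lin_step_def using assms(1) q0step_path[OF assms(2)] by blast

lemma q0_path_LinEnqs:
  assumes "distinct ps" and "\<forall>j\<in>set ps. cp0 j = Some A1 \<and> inn j = Some (val j)"
  shows "\<exists>ws. lts_path (AbsQ0 E) (\<sigma>, inn, rv, cp0) ws
                 (map val ps @ \<sigma>, inn, rv, \<lambda>j. if j \<in> set ps then Some A else cp0 j)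
             \<and> filter is_call_ret ws = []"
  using assms
proof (induction ps)
  case Nil
  have "(\<lambda>j. if j \<in> set [] then Some A else cp0 j) = cp0" by auto
  then show ?case by (auto intro: path_nil)
next
  case (Cons p ps)
  let ?cp = "\<lambda>j. if j \<in> set ps then Some A else cp0 j"
  from Cons obtain ws where ws: "lts_path (AbsQ0 E) (\<sigma>, inn, rv, cp0) ws (map val ps @ \<sigma>, inn, rv, ?cp)"
    "filter is_call_ret ws = []" by auto
  have "q0step E (map val ps @ \<sigma>, inn, rv, ?cp) (LinEnq (val p) p)
      (val p # map val ps @ \<sigma>, inn, rv, ?cp(p \<mapsto> A))"
    by (rule q0step.intros(2)) (use Cons.prems in auto)
  moreover have "?cp(p \<mapsto> A) = (\<lambda>j. if j \<in> set (p # ps) then Some A else cp0 j)"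
    by (auto simp: fun_eq_iff)
  ultimately have "lts_path (AbsQ0 E) (map val ps @ \<sigma>, inn, rv, ?cp) [LinEnq (val p) p]
      (map val (p # ps) @ \<sigma>, inn, rv, \<lambda>j. if j \<in> set (p # ps) then Some A else cp0 j)"
    by (simp add: q0step_path)
  from lts_path_append[OF ws(1) this] ws(2) show ?case by (intro exI) auto
qed

text \<open>In a linearization after inv(enq) of k, the completed enqueues are R-below k, so only
  pending enqueues precede k.\<close>

lemma lin_order_InvEnq_split:
  assumes I: "qinv inn (Os, R, l, rv, cp)" and k: "k \<notin> dom cp"
    and G: "lin_order (Os \<union> {k}, R \<union> COMPs Os l \<times> {k}, l(k \<mapsto> (d, PEND)), rv, cp(k \<mapsto> A1))
              (pre @ k # post)"
  shows "lin_order (Os, R, l, rv, cp) post"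
    and "\<forall>j\<in>set pre. j \<in> Os \<and> cp j = Some A1 \<and> inn j = Some (val_of l j)"
proof -
  note H = I[unfolded qinv.simps]
  have kOs: "k \<notin> Os" using H k by fastforce
  have dist: "distinct (pre @ k # post)" using G by simp
  show pre: "\<forall>j\<in>set pre. j \<in> Os \<and> cp j = Some A1 \<and> inn j = Some (val_of l j)"
  proof
    fix j assume j: "j \<in> set pre"
    have jOs: "j \<in> Os" using G j dist by auto
    have "(j, k) \<notin> R \<union> COMPs Os l \<times> {k}" using G j by (auto simp: sorted_wrt_append)
    then have "j \<notin> COMPs Os l" by auto
    with H jOs have "\<exists>e. l j = Some (e, PEND) \<and> cp j = Some A1" by (auto simp: COMPs_def)
    with H jOs show "j \<in> Os \<and> cp j = Some A1 \<and> inn j = Some (val_of l j)" by (auto simp: val_of_def)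
  qed
  have "COMPs Os l \<subseteq> set post"
  proof
    fix c assume c: "c \<in> COMPs Os l"
    then have "c \<in> set (pre @ k # post)" using G kOs by (auto simp: COMPs_def)
    moreover have "c \<noteq> k" using c kOs by (auto simp: COMPs_def)
    moreover have "c \<notin> set pre" using pre c H by (auto simp: COMPs_def)
    ultimately show "c \<in> set post" by auto
  qed
  moreover have "sorted_wrt (\<lambda>x y. (x, y) \<notin> R) post"
    using G by (auto simp: sorted_wrt_append elim!: sorted_wrt_mono_rel[rotated])
  ultimately show "lin_order (Os, R, l, rv, cp) post" using G dist by auto
qed

lemma lin_step_InvEnq_unlisted:
  assumes k: "k \<notin> dom cp" "k \<notin> Os" and d: "d \<noteq> E" and ids': "k \<notin> set ids'"
    and G: "lin_order (Os \<union> {k}, R \<union> COMPs Os l \<times> {k}, l(k \<mapsto> (d, PEND)), rv, cp(k \<mapsto> A1)) ids'"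
  shows "lin_step E inn (Os, R, l, rv, cp) (InvEnq d k)
           (inn(k \<mapsto> d)) (Os \<union> {k}, R \<union> COMPs Os l \<times> {k}, l(k \<mapsto> (d, PEND)), rv, cp(k \<mapsto> A1)) ids'"
proof (rule lin_step_single)
  show "lin_order (Os, R, l, rv, cp) ids'"
    using G k ids' by (auto simp: COMPs_def elim!: sorted_wrt_mono_rel[rotated])
  have vals: "map (val_of (l(k \<mapsto> (d, PEND)))) ids' = map (val_of l) ids'"
    using ids' by (auto simp: val_of_def)
  have cps: "lin_cp (Os \<union> {k}) (cp(k \<mapsto> A1)) ids' = (lin_cp Os cp ids')(k \<mapsto> A1)"
    using ids' k by (auto simp: lin_cp_def fun_eq_iff)
  show "q0step E (lin_state (Os, R, l, rv, cp) ids' inn) (InvEnq d k)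
      (lin_state (Os \<union> {k}, R \<union> COMPs Os l \<times> {k}, l(k \<mapsto> (d, PEND)), rv, cp(k \<mapsto> A1)) ids' (inn(k \<mapsto> d)))"
    unfolding lin_state.simps vals cps by (rule q0step.intros(1)) (use k d in \<open>auto simp: lin_cp_def\<close>)
qed

text \<open>AbsQ0 invokes k and then linearizes k and its pending predecessors in one go.\<close>

lemma lin_step_InvEnq_listed:
  assumes I: "qinv inn (Os, R, l, rv, cp)" and k: "k \<notin> dom cp" and d: "d \<noteq> E"
    and ids': "ids' = pre @ k # post"
    and G: "lin_order (Os \<union> {k}, R \<union> COMPs Os l \<times> {k}, l(k \<mapsto> (d, PEND)), rv, cp(k \<mapsto> A1)) ids'"
  shows "lin_step E inn (Os, R, l, rv, cp) (InvEnq d k)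
           (inn(k \<mapsto> d)) (Os \<union> {k}, R \<union> COMPs Os l \<times> {k}, l(k \<mapsto> (d, PEND)), rv, cp(k \<mapsto> A1)) ids'"
proof -
  let ?l' = "l(k \<mapsto> (d, PEND))" and ?cp = "(lin_cp Os cp post)(k \<mapsto> A1)"
  note split = lin_order_InvEnq_split[OF I k G[unfolded ids']]
  have dist: "distinct (pre @ k # post)" using G ids' by simp
  have st: "q0step E (map (val_of l) post, inn, rv, lin_cp Os cp post) (InvEnq d k)
      (map (val_of l) post, inn(k \<mapsto> d), rv, ?cp)"
    by (rule q0step.intros(1)) (use k d in \<open>auto simp: lin_cp_def\<close>)
  have "distinct (pre @ [k])" using dist by simp
  moreover have "\<forall>j\<in>set (pre @ [k]). ?cp j = Some A1 \<and> (inn(k \<mapsto> d)) j = Some (val_of ?l' j)"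
    using split(2) dist by (auto simp: lin_cp_def val_of_def)
  ultimately obtain ws where ws: "lts_path (AbsQ0 E) (map (val_of l) post, inn(k \<mapsto> d), rv, ?cp) ws
      (map (val_of ?l') (pre @ [k]) @ map (val_of l) post, inn(k \<mapsto> d), rv,
       \<lambda>j. if j \<in> set (pre @ [k]) then Some A else ?cp j)"
    "filter is_call_ret ws = []"
    by (blast dest: q0_path_LinEnqs)
  have "map (val_of ?l') (pre @ [k]) @ map (val_of l) post = map (val_of ?l') ids'"
    using ids' dist by (auto simp: val_of_def)
  moreover have "(\<lambda>j. if j \<in> set (pre @ [k]) then Some A else ?cp j) = lin_cp (Os \<union> {k}) (cp(k \<mapsto> A1)) ids'"
    using split(2) dist ids' by (auto simp: lin_cp_def fun_eq_iff)
  ultimately show ?thesis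
    unfolding lin_step_def using split(1) q0step_path_cons[OF st ws(1)] ws(2)
    by (intro exI[of _ post] exI[of _ "InvEnq d k # ws"]) auto
qed

lemma lin_step_InvEnq:
  assumes I: "qinv inn (Os, R, l, rv, cp)" and k: "k \<notin> dom cp" and d: "d \<noteq> E"
    and G: "lin_order (Os \<union> {k}, R \<union> COMPs Os l \<times> {k}, l(k \<mapsto> (d, PEND)), rv, cp(k \<mapsto> A1)) ids'"
  shows "lin_step E inn (Os, R, l, rv, cp) (InvEnq d k)
           (inn(k \<mapsto> d)) (Os \<union> {k}, R \<union> COMPs Os l \<times> {k}, l(k \<mapsto> (d, PEND)), rv, cp(k \<mapsto> A1)) ids'"
proof (cases "k \<in> set ids'")
  case True
  then obtain pre post where "ids' = pre @ k # post" by (meson split_list)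
  from lin_step_InvEnq_listed[OF I k d this G] show ?thesis .
next
  case False
  have "k \<notin> Os" using I k by (fastforce simp: qinv.simps)
  from lin_step_InvEnq_unlisted[OF k this d False G] show ?thesis .
qed

lemma lin_step_RetEnq:
  assumes k: "cp k = Some A1" "k \<in> Os" "l k = Some (d, PEND)"
    and G: "lin_order (Os, R, l(k \<mapsto> (d, COMP)), rv, cp(k \<mapsto> A2)) ids"
  shows "lin_step E inn (Os, R, l, rv, cp) (RetEnq k) inn (Os, R, l(k \<mapsto> (d, COMP)), rv, cp(k \<mapsto> A2)) ids"
proof (rule lin_step_single)
  have kids: "k \<in> set ids" using G k by (auto simp: COMPs_def)
  show "lin_order (Os, R, l, rv, cp) ids" using G k by (auto simp: COMPs_def)
  have vals: "map (val_of (l(k \<mapsto> (d, COMP)))) ids = map (val_of l) ids" using k by (auto simp: val_of_def)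
  show "q0step E (lin_state (Os, R, l, rv, cp) ids inn) (RetEnq k)
      (lin_state (Os, R, l(k \<mapsto> (d, COMP)), rv, cp(k \<mapsto> A2)) ids inn)"
    unfolding lin_state.simps vals lin_cp_upd[of A2, simplified]
    by (rule q0step.intros(3)) (use k kids in \<open>auto simp: lin_cp_def\<close>)
qed

text \<open>The dequeued enqueue is minimal, so it can be appended as the oldest queue element.\<close>

lemma lin_step_LinDeq:
  assumes I: "qinv inn (Os, R, l, rv, cp)" and k: "cp k = Some R1" "k' \<in> minset Os R" "l k' = Some (d, st)"
    and G: "lin_order (Os - {k'}, remove_from R k', l(k' := None), rv(k \<mapsto> d), cp(k \<mapsto> R2)) ids"
  shows "lin_step E inn (Os, R, l, rv, cp) (LinDeq d k)
           inn (Os - {k'}, remove_from R k', l(k' := None), rv(k \<mapsto> d), cp(k \<mapsto> R2)) ids"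
proof (rule lin_step_single)
  have k'Os: "k' \<in> Os" using k by (auto simp: minset_def)
  have kk': "k \<noteq> k'" using I k k'Os by (fastforce simp: qinv.simps)
  have k'ids: "k' \<notin> set ids" using G by auto
  have "sorted_wrt (\<lambda>x y. (x, y) \<notin> R) ids"
    using G by (auto simp: remove_from_def elim!: sorted_wrt_mono_rel[rotated])
  moreover have "\<forall>x\<in>set ids. (x, k') \<notin> R" using G k by (auto simp: minset_def)
  ultimately show "lin_order (Os, R, l, rv, cp) (ids @ [k'])"
    using G k'ids k'Os by (auto simp: COMPs_def sorted_wrt_append)
  have vals: "map (val_of l) (ids @ [k']) = map (val_of (l(k' := None))) ids @ [d]"
    using k k'ids by (auto simp: val_of_def)
  have cps: "lin_cp (Os - {k'}) (cp(k \<mapsto> R2)) ids = (lin_cp Os cp (ids @ [k']))(k \<mapsto> R2)"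
    using kk' by (auto simp: lin_cp_def fun_eq_iff)
  show "q0step E (lin_state (Os, R, l, rv, cp) (ids @ [k']) inn) (LinDeq d k)
      (lin_state (Os - {k'}, remove_from R k', l(k' := None), rv(k \<mapsto> d), cp(k \<mapsto> R2)) ids inn)"
    unfolding lin_state.simps vals cps by (rule q0step.intros(5)) (use k in \<open>auto simp: lin_cp_def\<close>)
qed

text \<open>All pool elements are pending, so AbsQ0 can dequeue from the empty queue first and
  linearize the enqueues of the new linearization afterwards.\<close>

lemma lin_step_LinDeq_EMPTY:
  assumes I: "qinv inn (Os, R, l, rv, cp)" and k: "cp k = Some R1" "\<forall>o'\<in>Os. \<exists>d. l o' = Some (d, PEND)"
    and G: "lin_order (Os, R, l, rv(k \<mapsto> E), cp(k \<mapsto> R2)) ids"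
  shows "lin_step E inn (Os, R, l, rv, cp) (LinDeq E k) inn (Os, R, l, rv(k \<mapsto> E), cp(k \<mapsto> R2)) ids"
proof -
  have ids: "\<forall>j\<in>set ids. j \<in> Os \<and> cp j = Some A1 \<and> inn j = Some (val_of l j) \<and> j \<noteq> k"
  proof
    fix j assume "j \<in> set ids"
    then have jOs: "j \<in> Os" using G by auto
    then obtain e where "l j = Some (e, PEND)" using k by auto
    with I jOs k show "j \<in> Os \<and> cp j = Some A1 \<and> inn j = Some (val_of l j) \<and> j \<noteq> k"
      by (fastforce simp: qinv.simps val_of_def)
  qed
  have st: "q0step E ([], inn, rv, lin_cp Os cp []) (LinDeq E k) ([], inn, rv(k \<mapsto> E), (lin_cp Os cp [])(k \<mapsto> R2))"
    by (rule q0step.intros(6)) (use k in \<open>auto simp: lin_cp_def\<close>)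
  obtain ws where ws: "lts_path (AbsQ0 E) ([], inn, rv(k \<mapsto> E), (lin_cp Os cp [])(k \<mapsto> R2)) ws
      (map (val_of l) ids @ [], inn, rv(k \<mapsto> E), \<lambda>j. if j \<in> set ids then Some A else ((lin_cp Os cp [])(k \<mapsto> R2)) j)"
      "filter is_call_ret ws = []"
    using q0_path_LinEnqs[of ids "(lin_cp Os cp [])(k \<mapsto> R2)" inn "val_of l" E "[]" "rv(k \<mapsto> E)"] G ids
    by (auto simp: lin_cp_def)
  have "(\<lambda>j. if j \<in> set ids then Some A else ((lin_cp Os cp [])(k \<mapsto> R2)) j) = lin_cp Os (cp(k \<mapsto> R2)) ids"
    using ids by (auto simp: lin_cp_def fun_eq_iff)
  moreover have "lin_order (Os, R, l, rv, cp) []" using k by (fastforce simp: COMPs_def)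
  ultimately show ?thesis
    unfolding lin_step_def using q0step_path_cons[OF st ws(1)] ws(2)
    by (intro exI[of _ "[]"] exI[of _ "LinDeq E k # ws"]) auto
qed

lemma lin_step_qstep:
  assumes I: "qinv inn s" and st: "qstep E s a s'" and G: "lin_order s' ids'"
  shows "lin_step E inn s a (record_enq inn a) s' ids'"
  using st
proof cases
  case (1 k cp d Os R l rv)
  then show ?thesis using lin_step_InvEnq I G by simp
next
  case (2 k cp Os R l rv)
  then show ?thesis
    using G by (auto intro!: lin_step_single q0step.intros(4) simp: lin_cp_upd) (auto simp: lin_cp_def)
next
  case (3 cp k rv d Os R l)
  then show ?thesis
    using G by (auto intro!: lin_step_single q0step.intros(7) simp: lin_cp_upd) (auto simp: lin_cp_def)
next
  case (4 cp k Os l d R rv)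
  then show ?thesis using lin_step_RetEnq G by simp
next
  case (5 cp k Os R l rv)
  then show ?thesis
    using G by (auto intro!: lin_step_single q0step.intros(3) simp: lin_cp_upd) (auto simp: lin_cp_def)
next
  case (6 cp k d k' Os R l st rv)
  then show ?thesis using lin_step_LinDeq I G by simp
next
  case (7 cp k Os l R rv)
  then show ?thesis using lin_step_LinDeq_EMPTY I G by simp
qed

lemma AbsQ_execs_lin_reachable:
  assumes "execs (AbsQ E) tr s"
  shows "\<exists>inn. qinv inn s \<and> (\<forall>ids. lin_order s ids \<longrightarrow>
           (\<exists>tr0. execs (AbsQ0 E) tr0 (lin_state s ids inn) \<and> filter is_call_ret tr0 = filter is_call_ret tr))"
  using assms
proof (induction rule: execs.induct)
  case execs_nil
  have "lin_state (init (AbsQ E)) ids Map.empty = init (AbsQ0 E)"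
    if "lin_order (init (AbsQ E)) ids" for ids
    using that by (simp add: AbsQ_def AbsQ0_def lin_cp_def fun_eq_iff)
  then show ?case
    by (intro exI[of _ Map.empty]) (auto simp: AbsQ_def qinv.simps COMPs_def intro: execs.execs_nil)
next
  case (execs_snoc tr s a s')
  then obtain inn where I: "qinv inn s" and IH: "\<forall>ids. lin_order s ids \<longrightarrow>
      (\<exists>tr0. execs (AbsQ0 E) tr0 (lin_state s ids inn) \<and> filter is_call_ret tr0 = filter is_call_ret tr)"
    by blast
  have st: "qstep E s a s'" using execs_snoc(2) by (simp add: AbsQ_def)
  have "\<exists>tr0. execs (AbsQ0 E) tr0 (lin_state s' ids' (record_enq inn a))
      \<and> filter is_call_ret tr0 = filter is_call_ret (tr @ [a])"
    if G: "lin_order s' ids'" for ids'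
  proof -
    obtain ids ws where "lin_order s ids"
      and path: "lts_path (AbsQ0 E) (lin_state s ids inn) ws (lin_state s' ids' (record_enq inn a))"
      and hist: "filter is_call_ret ws = filter is_call_ret [a]"
      using lin_step_qstep[OF I st G] unfolding lin_step_def by blast
    with IH obtain tr0 where "execs (AbsQ0 E) tr0 (lin_state s ids inn)"
      and "filter is_call_ret tr0 = filter is_call_ret tr" by blast
    with execs_lts_path[OF path] hist show ?thesis by (intro exI[of _ "tr0 @ ws"]) auto
  qed
  with qinv_step[OF I st] show ?case by blast
qed

lemma qinv_lin_order_exists:
  assumes "qinv inn s"
  shows "\<exists>ids. lin_order s ids"
proof -
  obtain Os R l rv cp where s: "s = (Os, R, l, rv, cp)" by (cases s)
  with assms obtain L where "distinct L" "set L = COMPs Os l" "sorted_wrt (\<lambda>x y. (x, y) \<notin> R) L"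
    by (auto simp: qinv.simps)
  then show ?thesis unfolding s by (auto simp: COMPs_def)
qed

lemma AbsQ_refines_AbsQ0: "refines (AbsQ E) (AbsQ0 E)"
proof (rule refinesI)
  fix tr s
  assume "execs (AbsQ E) tr s"
  then obtain inn where I: "qinv inn s" and reach: "\<forall>ids. lin_order s ids \<longrightarrow>
      (\<exists>tr0. execs (AbsQ0 E) tr0 (lin_state s ids inn) \<and> filter is_call_ret tr0 = filter is_call_ret tr)"
    using AbsQ_execs_lin_reachable[of E tr s] by blast
  obtain ids where "lin_order s ids" using qinv_lin_order_exists[OF I] by blast
  with reach show "\<exists>tr' s'. execs (AbsQ0 E) tr' s' \<and> filter is_call_ret tr' = filter is_call_ret tr"
    by blast
qed

theorem theorem3:
  fixes EMPTY :: 'v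
  shows "refines (AbsQ EMPTY) (AbsQ0 EMPTY) \<and> refines (AbsQ0 EMPTY) (AbsQ EMPTY)"
  by (intro conjI AbsQ_refines_AbsQ0 AbsQ0_refines_AbsQ)

end
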